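(* For every set $A$, the lattice of all clones on $A$ (ordered by inclusion) is isomorphic to the lattice of all subalgebras of the full block algebra on $A$.
   Context: Finitary operations on $A$ include nullary ones (elements of $A$). A clone on $A$ is a set of finitary operations on $A$ that contains all projections $p^{(n)}_i(a_1,\dots,a_n)=a_i$, is closed under composition (if $f$ is $n$-ary and $g_1,\dots,g_n$ are $k$-ary in the set, $k\ge0$, then $\mathbf a\mapsto f(g_1(\mathbf a),\dots,g_n(\mathbf a))$ on $A^k$ is in the set) and under restriction (if an $n$-ary $f$, $n\ge1$, does not depend on its last argument, then the $(n-1)$-ary $g(a_1,\dots,a_{n-1})=f(a_1,\dots,a_{n-1},b)$ is in the set). Let $\omega=\{1,2,\dots\}$. The top extension of $f:A^n\to A$ is $f^\top:A^\omega\to A$, $f^\top(s)=f(s_1,\dots,s_n)$. The full block algebra on $A$ is the algebra with universe $\{f^\top: f\text{ a finitary operation on }A\}$, nullary operations $\mathsf e_i(s)=s_i$ ($i\ge 1$) and $(n+1)$-ary operations $q_n(\varphi,\psi_1,\dots,\psi_n)(s)=\varphi(s[\psi_1(s),\dots,\psi_n(s)])$ ($n\ge0$), where $s[b_1,\dots,b_n]$ replaces the first $n$ entries of $s$ by $b_1,\dots,b_n$. *)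

theory Defs
  imports Main
begin

text \<open>An n-ary operation is represented as a pair
  (n, f) with f :: 'a list => 'a mapping lists of length n over A into A, and
  extensional (value undefined) outside A^n. Nullary operations are included (n = 0).\<close>

definition tuples :: "'a set \<Rightarrow> nat \<Rightarrow> 'a list set" where
  "tuples A n = {xs. length xs = n \<and> set xs \<subseteq> A}"

definition ops :: "'a set \<Rightarrow> (nat \<times> ('a list \<Rightarrow> 'a)) set" where
  "ops A = {(n, f). (\<forall>xs \<in> tuples A n. f xs \<in> A) \<and>
                    (\<forall>xs. xs \<notin> tuples A n \<longrightarrow> f xs = undefined)}"

text \<open>Projection p^(n)_(i+1) (0-based index i < n).\<close>
definition proj :: "'a set \<Rightarrow> nat \<Rightarrow> nat \<Rightarrow> nat \<times> ('a list \<Rightarrow> 'a)" where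
  "proj A n i = (n, \<lambda>xs. if xs \<in> tuples A n then xs ! i else undefined)"

definition compose :: "'a set \<Rightarrow> nat \<times> ('a list \<Rightarrow> 'a) \<Rightarrow> (nat \<times> ('a list \<Rightarrow> 'a)) list
                        \<Rightarrow> nat \<Rightarrow> nat \<times> ('a list \<Rightarrow> 'a)" where
  "compose A f gs k = (k, \<lambda>xs. if xs \<in> tuples A k then snd f (map (\<lambda>g. snd g xs) gs) else undefined)"

definition is_clone :: "'a set \<Rightarrow> (nat \<times> ('a list \<Rightarrow> 'a)) set \<Rightarrow> bool" where
  "is_clone A C \<longleftrightarrow>
     C \<subseteq> ops A \<and>
     (\<forall>n i. i < n \<longrightarrow> proj A n i \<in> C) \<and>
     (\<forall>f \<in> C. \<forall>gs k. set gs \<subseteq> C \<and> length gs = fst f \<and> (\<forall>g \<in> set gs. fst g = k)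
                 \<longrightarrow> compose A f gs k \<in> C) \<and>
     (\<forall>n f. (Suc n, f) \<in> C \<and>
            (\<forall>xs \<in> tuples A n. \<forall>b \<in> A. \<forall>c \<in> A. f (xs @ [b]) = f (xs @ [c]))
            \<longrightarrow> (\<forall>b \<in> A. (n, \<lambda>xs. if xs \<in> tuples A n then f (xs @ [b]) else undefined) \<in> C))"

text \<open>The full block algebra. Sequences s in A^omega are represented 0-based:
  s_i (i >= 1) is s (i - 1). Elements are extensional functions on A^omega.\<close>

definition seqs :: "'a set \<Rightarrow> (nat \<Rightarrow> 'a) set" where
  "seqs A = {s. \<forall>i. s i \<in> A}"

definition top_ext :: "'a set \<Rightarrow> nat \<times> ('a list \<Rightarrow> 'a) \<Rightarrow> (nat \<Rightarrow> 'a) \<Rightarrow> 'a" where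
  "top_ext A f = (\<lambda>s. if s \<in> seqs A then snd f (map s [0..<fst f]) else undefined)"

definition block_univ :: "'a set \<Rightarrow> ((nat \<Rightarrow> 'a) \<Rightarrow> 'a) set" where
  "block_univ A = top_ext A ` ops A"

definition block_e :: "'a set \<Rightarrow> nat \<Rightarrow> (nat \<Rightarrow> 'a) \<Rightarrow> 'a" where
  "block_e A i = (\<lambda>s. if s \<in> seqs A then s (i - 1) else undefined)"

definition seq_replace :: "(nat \<Rightarrow> 'a) \<Rightarrow> 'a list \<Rightarrow> nat \<Rightarrow> 'a" where
  "seq_replace s bs = (\<lambda>j. if j < length bs then bs ! j else s j)"

text \<open>q_n(phi, psi_1, ..., psi_n) with n = length psis.\<close>
definition block_q :: "'a set \<Rightarrow> ((nat \<Rightarrow> 'a) \<Rightarrow> 'a) \<Rightarrow> ((nat \<Rightarrow> 'a) \<Rightarrow> 'a) list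
                       \<Rightarrow> (nat \<Rightarrow> 'a) \<Rightarrow> 'a" where
  "block_q A \<phi> \<psi>s = (\<lambda>s. if s \<in> seqs A then \<phi> (seq_replace s (map (\<lambda>\<psi>. \<psi> s) \<psi>s)) else undefined)"

definition is_block_subalg :: "'a set \<Rightarrow> ((nat \<Rightarrow> 'a) \<Rightarrow> 'a) set \<Rightarrow> bool" where
  "is_block_subalg A B \<longleftrightarrow>
     B \<subseteq> block_univ A \<and>
     (\<forall>i \<ge> 1. block_e A i \<in> B) \<and>
     (\<forall>\<phi> \<in> B. \<forall>\<psi>s. set \<psi>s \<subseteq> B \<longrightarrow> block_q A \<phi> \<psi>s \<in> B)"

end

theory Submission
  imports Defs
begin

(* The isomorphism is C \<mapsto> {f\<^sup>\<top> | f \<in> C}, with inverse B \<mapsto> {f | f\<^sup>\<top> \<in> B}.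
   Two operations have the same top extension iff they coincide after padding both with
   dummy trailing arguments to a common arity.  A clone can add such arguments (composition
   with projections) and remove them again (restriction), so it is saturated under equality
   of top extensions and is recovered from its image.  Projections become the constants e_i;
   after padding all operations to a common arity K, composition becomes q_K, and q_n with
   n < K is q_K with the remaining arguments filled by e_(n+1), ..., e_K. *)

lemma tuples_length: "xs \<in> tuples A n \<Longrightarrow> length xs = n"
  by (simp add: tuples_def)

lemma ops_closed: "(n, f) \<in> ops A \<Longrightarrow> xs \<in> tuples A n \<Longrightarrow> f xs \<in> A"
  by (simp add: ops_def)

lemma ops_undefined: "(n, f) \<in> ops A \<Longrightarrow> xs \<notin> tuples A n \<Longrightarrow> f xs = undefined"
  by (simp add: ops_def)

lemma map_upt_in_tuples: "s \<in> seqs A \<Longrightarrow> map s [0..<n] \<in> tuples A n"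
  by (auto simp: seqs_def tuples_def)

lemma seq_replace_in_seqs: "s \<in> seqs A \<Longrightarrow> set bs \<subseteq> A \<Longrightarrow> seq_replace s bs \<in> seqs A"
  by (auto simp: seqs_def seq_replace_def dest: nth_mem)

lemma map_seq_replace: "n \<le> length bs \<Longrightarrow> map (seq_replace s bs) [0..<n] = take n bs"
  by (rule nth_equalityI) (auto simp: seq_replace_def)

lemma top_ext_pair: "top_ext A (n, f) s = (if s \<in> seqs A then f (map s [0..<n]) else undefined)"
  by (simp add: top_ext_def)

lemma top_ext_in: "f \<in> ops A \<Longrightarrow> s \<in> seqs A \<Longrightarrow> top_ext A f s \<in> A"
  by (cases f) (auto simp: top_ext_pair intro: ops_closed map_upt_in_tuples)

lemma top_ext_inj_same_arity:
  assumes f: "f \<in> ops A" and g: "g \<in> ops A" and "fst f = fst g"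
    and top_ext_eq: "top_ext A f = top_ext A g"
  shows "f = g"
proof -
  obtain n f' g' where f_eq: "f = (n, f')" and g_eq: "g = (n, g')"
    using \<open>fst f = fst g\<close> by (cases f, cases g) auto
  have "f' xs = g' xs" for xs
  proof (cases "xs \<in> tuples A n")
    case True
    let ?s = "seq_replace (\<lambda>_. f' xs) xs"
    have "(\<lambda>_. f' xs) \<in> seqs A"
      using ops_closed[OF f[unfolded f_eq] True] by (simp add: seqs_def)
    then have "?s \<in> seqs A"
      using True by (auto simp: tuples_def intro: seq_replace_in_seqs)
    moreover have "map ?s [0..<n] = xs"
      using map_seq_replace[of n xs] tuples_length[OF True] by simp
    ultimately show ?thesis
      using fun_cong[OF top_ext_eq, of ?s] by (simp add: f_eq g_eq top_ext_pair)
  next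
    case False
    then show ?thesis
      using ops_undefined[OF f[unfolded f_eq] False] ops_undefined[OF g[unfolded g_eq] False]
      by simp
  qed
  then show ?thesis by (simp add: f_eq g_eq ext)
qed

definition pad :: "'a set \<Rightarrow> nat \<times> ('a list \<Rightarrow> 'a) \<Rightarrow> nat \<Rightarrow> nat \<times> ('a list \<Rightarrow> 'a)" where
  "pad A g K = (K, \<lambda>xs. if xs \<in> tuples A K then snd g (take (fst g) xs) else undefined)"

lemma fst_pad [simp]: "fst (pad A g K) = K"
  by (simp add: pad_def)

lemma pad_in_ops:
  assumes g: "g \<in> ops A" and "fst g \<le> K"
  shows "pad A g K \<in> ops A"
proof -
  have "take (fst g) xs \<in> tuples A (fst g)" if "xs \<in> tuples A K" for xs
    using that \<open>fst g \<le> K\<close> set_take_subset by (fastforce simp: tuples_def)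
  then show ?thesis
    using ops_closed[of "fst g" "snd g"] g by (auto simp: pad_def ops_def)
qed

lemma pad_arity_self: "g \<in> ops A \<Longrightarrow> pad A g (fst g) = g"
  by (cases g) (auto simp: pad_def tuples_length ops_undefined)

lemma top_ext_pad: "fst g \<le> K \<Longrightarrow> top_ext A (pad A g K) = top_ext A g"
  by (cases g) (auto simp: pad_def top_ext_pair map_upt_in_tuples take_map)

lemma compose_proj_eq_pad:
  assumes "fst g \<le> K"
  shows "compose A g (map (proj A K) [0..<fst g]) K = pad A g K"
proof -
  have "map (\<lambda>i. xs ! i) [0..<fst g] = take (fst g) xs" if "length xs = K" for xs :: "'a list"
    using that assms by (intro nth_equalityI) auto
  then show ?thesis
    by (auto simp: compose_def pad_def proj_def tuples_length comp_def)
qed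

lemma clone_subset_ops: "is_clone A C \<Longrightarrow> C \<subseteq> ops A"
  by (simp add: is_clone_def)

lemma clone_proj: "is_clone A C \<Longrightarrow> i < n \<Longrightarrow> proj A n i \<in> C"
  by (simp add: is_clone_def)

lemma clone_compose:
  "is_clone A C \<Longrightarrow> f \<in> C \<Longrightarrow> set gs \<subseteq> C \<Longrightarrow> length gs = fst f \<Longrightarrow>
   \<forall>g \<in> set gs. fst g = k \<Longrightarrow> compose A f gs k \<in> C"
  unfolding is_clone_def by blast

lemma clone_restrict:
  "is_clone A C \<Longrightarrow> (Suc n, f) \<in> C \<Longrightarrow>
   \<forall>xs \<in> tuples A n. \<forall>b \<in> A. \<forall>c \<in> A. f (xs @ [b]) = f (xs @ [c]) \<Longrightarrow> b \<in> A \<Longrightarrow>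
   (n, \<lambda>xs. if xs \<in> tuples A n then f (xs @ [b]) else undefined) \<in> C"
  unfolding is_clone_def by blast

lemma clone_pad:
  assumes C: "is_clone A C" and g: "g \<in> C" and "fst g \<le> K"
  shows "pad A g K \<in> C"
proof -
  have "set (map (proj A K) [0..<fst g]) \<subseteq> C"
    using clone_proj[OF C] \<open>fst g \<le> K\<close> by auto
  then have "compose A g (map (proj A K) [0..<fst g]) K \<in> C"
    by (intro clone_compose[OF C g]) (auto simp: proj_def)
  then show ?thesis
    by (simp add: compose_proj_eq_pad[OF \<open>fst g \<le> K\<close>])
qed

lemma ops_empty_eq_proj:
  fixes f :: "'a list \<Rightarrow> 'a"
  assumes "(n, f) \<in> ops {}"
  shows "0 < n \<and> (n, f) = proj {} n 0"
proof -
  have "[] \<notin> tuples ({} :: 'a set) n"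
    using ops_closed[OF assms] by blast
  then have "0 < n" by (simp add: tuples_def)
  then have "xs \<notin> tuples ({} :: 'a set) n" for xs by (auto simp: tuples_def)
  then show ?thesis
    using \<open>0 < n\<close> ops_undefined[OF assms] by (auto simp: proj_def)
qed

lemma snd_pad_Suc_append:
  assumes "fst g \<le> K" and "xs \<in> tuples A K" and "b \<in> A"
  shows "snd (pad A g (Suc K)) (xs @ [b]) = snd (pad A g K) xs"
proof -
  have "xs @ [b] \<in> tuples A (Suc K)" and "take (fst g) (xs @ [b]) = take (fst g) xs"
    using assms by (auto simp: tuples_def)
  with assms(2) show ?thesis by (simp add: pad_def)
qed

(* Dummy arguments are removed one at a time by restriction; over the empty set every
   operation is a projection. *)
lemma clone_unpad:
  assumes C: "is_clone A C" and g: "g \<in> ops A" and "fst g \<le> K" and "pad A g K \<in> C"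
  shows "g \<in> C"
proof (cases "A = {}")
  case True
  obtain n f where "g = (n, f)" by (cases g)
  then show ?thesis
    using ops_empty_eq_proj[of n f] g clone_proj[OF C] True by metis
next
  case False
  then obtain a where a: "a \<in> A" by blast
  from \<open>fst g \<le> K\<close> \<open>pad A g K \<in> C\<close> show ?thesis
  proof (induction K rule: dec_induct)
    case base
    then show ?case using pad_arity_self[OF g] by simp
  next
    case (step K)
    let ?f = "snd (pad A g (Suc K))"
    have "(Suc K, ?f) \<in> C"
      using step.prems by (simp add: pad_def)
    moreover have "\<forall>xs \<in> tuples A K. \<forall>b \<in> A. \<forall>c \<in> A. ?f (xs @ [b]) = ?f (xs @ [c])"
      using snd_pad_Suc_append[OF step.hyps(1)] by simp
    ultimately have "(K, \<lambda>xs. if xs \<in> tuples A K then ?f (xs @ [a]) else undefined) \<in> C"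
      by (rule clone_restrict[OF C _ _ a])
    also have "(K, \<lambda>xs. if xs \<in> tuples A K then ?f (xs @ [a]) else undefined) = pad A g K"
      using snd_pad_Suc_append[OF step.hyps(1) _ a] by (auto simp: pad_def)
    finally show ?case by (rule step.IH)
  qed
qed

lemma clone_top_ext_closed:
  assumes C: "is_clone A C" and "c \<in> C" and f: "f \<in> ops A" and "top_ext A f = top_ext A c"
  shows "f \<in> C"
proof -
  define K where "K = fst f + fst c"
  have c: "c \<in> ops A" using \<open>c \<in> C\<close> clone_subset_ops[OF C] by blast
  have "pad A f K = pad A c K"
  proof (rule top_ext_inj_same_arity)
    show "pad A f K \<in> ops A" and "pad A c K \<in> ops A"
      using pad_in_ops[OF f] pad_in_ops[OF c] by (simp_all add: K_def)
    show "top_ext A (pad A f K) = top_ext A (pad A c K)"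
      using \<open>top_ext A f = top_ext A c\<close> by (simp add: K_def top_ext_pad)
  qed simp
  then have "pad A f K \<in> C"
    using clone_pad[OF C \<open>c \<in> C\<close>] by (simp add: K_def)
  then show ?thesis
    using clone_unpad[OF C f, of K] by (simp add: K_def)
qed

lemma proj_in_ops: "i < n \<Longrightarrow> proj A n i \<in> ops A"
  by (auto simp: proj_def ops_def tuples_def)

lemma top_ext_proj: "i < n \<Longrightarrow> top_ext A (proj A n i) = block_e A (Suc i)"
  by (auto simp: proj_def top_ext_pair block_e_def map_upt_in_tuples)

lemma seq_replace_append_tail:
  "length bs \<le> K \<Longrightarrow> seq_replace s (bs @ map s [length bs..<K]) = seq_replace s bs"
  by (auto simp: seq_replace_def nth_append)

lemma block_q_append_e:
  assumes "length \<psi>s \<le> K"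
  shows "block_q A \<phi> (\<psi>s @ map (\<lambda>j. block_e A (Suc j)) [length \<psi>s..<K]) = block_q A \<phi> \<psi>s"
proof
  fix s
  show "block_q A \<phi> (\<psi>s @ map (\<lambda>j. block_e A (Suc j)) [length \<psi>s..<K]) s = block_q A \<phi> \<psi>s s"
  proof (cases "s \<in> seqs A")
    case True
    have "map (\<lambda>\<psi>. \<psi> s) (\<psi>s @ map (\<lambda>j. block_e A (Suc j)) [length \<psi>s..<K])
        = map (\<lambda>\<psi>. \<psi> s) \<psi>s @ map s [length (map (\<lambda>\<psi>. \<psi> s) \<psi>s)..<K]"
      using True by (simp add: block_e_def)
    moreover have "seq_replace s (map (\<lambda>\<psi>. \<psi> s) \<psi>s @ map s [length (map (\<lambda>\<psi>. \<psi> s) \<psi>s)..<K])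
        = seq_replace s (map (\<lambda>\<psi>. \<psi> s) \<psi>s)"
      using assms by (intro seq_replace_append_tail) simp
    ultimately show ?thesis
      by (simp only: block_q_def)
  qed (simp add: block_q_def)
qed

lemma compose_in_ops:
  assumes f: "f \<in> ops A" and gs: "set gs \<subseteq> ops A" and "length gs = fst f"
    and arity: "\<forall>g \<in> set gs. fst g = k"
  shows "compose A f gs k \<in> ops A"
proof -
  have "map (\<lambda>g. snd g xs) gs \<in> tuples A (fst f)" if "xs \<in> tuples A k" for xs
    using that gs arity \<open>length gs = fst f\<close> ops_closed[of k _ A xs]
    by (fastforce simp: tuples_def)
  then show ?thesis
    using f ops_closed[of "fst f" "snd f" A] by (auto simp: compose_def ops_def)
qed

lemma top_ext_compose:
  assumes gs: "set gs \<subseteq> ops A" and "length gs = fst f" and arity: "\<forall>g \<in> set gs. fst g = k"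
  shows "top_ext A (compose A f gs k) = block_q A (top_ext A f) (map (top_ext A) gs)"
proof
  fix s
  show "top_ext A (compose A f gs k) s = block_q A (top_ext A f) (map (top_ext A) gs) s"
  proof (cases "s \<in> seqs A")
    case True
    define bs where "bs = map (\<lambda>g. top_ext A g s) gs"
    have "seq_replace s bs \<in> seqs A"
      using True gs top_ext_in by (force simp: bs_def intro: seq_replace_in_seqs)
    moreover have "map (seq_replace s bs) [0..<fst f] = bs"
      using map_seq_replace[of "fst f" bs s] \<open>length gs = fst f\<close> by (simp add: bs_def)
    ultimately have "block_q A (top_ext A f) (map (top_ext A) gs) s = snd f bs"
      using True by (simp add: block_q_def top_ext_def bs_def comp_def)
    also have "bs = map (\<lambda>g. snd g (map s [0..<k])) gs"
      using arity True by (auto simp: bs_def top_ext_def)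
    also have "snd f \<dots> = top_ext A (compose A f gs k) s"
      using True map_upt_in_tuples[OF True] by (simp add: top_ext_def compose_def)
    finally show ?thesis by (rule sym)
  qed (simp add: top_ext_def compose_def block_q_def)
qed

lemma clone_block_q_in_image:
  assumes C: "is_clone A C" and f: "f \<in> C" and gs: "set gs \<subseteq> C"
  shows "block_q A (top_ext A f) (map (top_ext A) gs) \<in> top_ext A ` C"
proof -
  define L where "L = length gs"
  define K where "K = fst f + L + sum_list (map fst gs)"
  define hs where "hs = map (\<lambda>g. pad A g K) gs @ map (proj A K) [L..<K]"
  have arity_le: "fst g \<le> K" if "g \<in> set gs" for g
    using that member_le_sum_list[of "fst g" "map fst gs"] by (simp add: K_def)
  have "pad A g K \<in> C" if "g \<in> set gs" for g
    using clone_pad[OF C _ arity_le[OF that]] gs that by blast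
  moreover have "proj A K j \<in> C" if "j \<in> {L..<K}" for j
    using clone_proj[OF C] that by simp
  ultimately have hs_C: "set hs \<subseteq> C"
    by (auto simp: hs_def)
  then have hs_ops: "set hs \<subseteq> ops A"
    using clone_subset_ops[OF C] by blast
  have hs_arity: "\<forall>h \<in> set hs. fst h = K"
    by (auto simp: hs_def proj_def)
  have hs_length: "length hs = fst (pad A f K)"
    by (simp add: hs_def K_def L_def)
  have "map (top_ext A) hs = map (top_ext A) gs @ map (\<lambda>j. block_e A (Suc j)) [L..<K]"
    using arity_le by (simp add: hs_def top_ext_pad top_ext_proj)
  then have "block_q A (top_ext A f) (map (top_ext A) gs)
      = block_q A (top_ext A (pad A f K)) (map (top_ext A) hs)"
    using block_q_append_e[of "map (top_ext A) gs" K A] top_ext_pad[of f K A]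
    by (simp add: K_def L_def)
  also have "\<dots> = top_ext A (compose A (pad A f K) hs K)"
    using top_ext_compose[OF hs_ops hs_length hs_arity] by simp
  finally have q_eq: "block_q A (top_ext A f) (map (top_ext A) gs)
      = top_ext A (compose A (pad A f K) hs K)" .
  have "compose A (pad A f K) hs K \<in> C"
    using clone_compose[OF C clone_pad[OF C f] hs_C hs_length hs_arity] by (simp add: K_def)
  then show ?thesis
    unfolding q_eq by (rule imageI)
qed

lemma clone_image_block_subalg:
  assumes C: "is_clone A C"
  shows "is_block_subalg A (top_ext A ` C)"
  unfolding is_block_subalg_def
proof (intro conjI allI impI ballI)
  show "top_ext A ` C \<subseteq> block_univ A"
    using clone_subset_ops[OF C] by (auto simp: block_univ_def)
next
  fix i :: nat
  assume "1 \<le> i"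
  then have "block_e A i = top_ext A (proj A i (i - 1))"
    using top_ext_proj[of "i - 1" i A] by simp
  then show "block_e A i \<in> top_ext A ` C"
    using clone_proj[OF C, of "i - 1" i] \<open>1 \<le> i\<close> by simp
next
  fix \<phi> \<psi>s
  assume "\<phi> \<in> top_ext A ` C" and "set \<psi>s \<subseteq> top_ext A ` C"
  moreover have "\<psi>s \<in> map (top_ext A) ` lists C"
    using \<open>set \<psi>s \<subseteq> top_ext A ` C\<close> lists_image[of "top_ext A" C] by auto
  ultimately obtain f gs where "f \<in> C" "\<phi> = top_ext A f" "gs \<in> lists C" "\<psi>s = map (top_ext A) gs"
    by blast
  then show "block_q A \<phi> \<psi>s \<in> top_ext A ` C"
    using clone_block_q_in_image[OF C] by (simp add: in_lists_conv_set subset_code(1))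
qed

lemma restrict_in_ops:
  assumes "(Suc n, f) \<in> ops A" and "b \<in> A"
  shows "(n, \<lambda>xs. if xs \<in> tuples A n then f (xs @ [b]) else undefined) \<in> ops A"
proof -
  have "f (xs @ [b]) \<in> A" if "xs \<in> tuples A n" for xs
    using that \<open>b \<in> A\<close> ops_closed[OF assms(1), of "xs @ [b]"] by (simp add: tuples_def)
  then show ?thesis
    by (simp add: ops_def)
qed

lemma top_ext_restrict:
  assumes "b \<in> A" and last_dummy: "\<forall>xs \<in> tuples A n. \<forall>b \<in> A. \<forall>c \<in> A. f (xs @ [b]) = f (xs @ [c])"
  shows "top_ext A (n, \<lambda>xs. if xs \<in> tuples A n then f (xs @ [b]) else undefined)
    = top_ext A (Suc n, f)"
proof
  fix s
  show "top_ext A (n, \<lambda>xs. if xs \<in> tuples A n then f (xs @ [b]) else undefined) s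
    = top_ext A (Suc n, f) s"
  proof (cases "s \<in> seqs A")
    case True
    then have "s n \<in> A" and "map s [0..<n] \<in> tuples A n"
      by (auto simp: seqs_def map_upt_in_tuples)
    then have "f (map s [0..<n] @ [b]) = f (map s [0..<n] @ [s n])"
      using last_dummy \<open>b \<in> A\<close> by blast
    with True \<open>map s [0..<n] \<in> tuples A n\<close> show ?thesis
      by (simp add: top_ext_pair)
  qed (simp add: top_ext_pair)
qed

lemma block_subalg_preimage_clone:
  assumes B: "is_block_subalg A B"
  shows "is_clone A {f \<in> ops A. top_ext A f \<in> B}"
  unfolding is_clone_def
proof (intro conjI allI impI ballI)
  fix n i :: nat
  assume "i < n"
  then show "proj A n i \<in> {f \<in> ops A. top_ext A f \<in> B}"
    using B proj_in_ops[of i n A] top_ext_proj[of i n A] by (simp add: is_block_subalg_def)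
next
  fix f gs k
  assume f: "f \<in> {f \<in> ops A. top_ext A f \<in> B}"
    and gs: "set gs \<subseteq> {f \<in> ops A. top_ext A f \<in> B} \<and> length gs = fst f \<and> (\<forall>g \<in> set gs. fst g = k)"
  have gs_ops: "set gs \<subseteq> ops A" and len: "length gs = fst f"
    and arity: "\<forall>g \<in> set gs. fst g = k"
    using gs by blast+
  have "set (map (top_ext A) gs) \<subseteq> B"
    using gs by auto
  then have "block_q A (top_ext A f) (map (top_ext A) gs) \<in> B"
    using B f by (simp add: is_block_subalg_def)
  moreover have "compose A f gs k \<in> ops A"
    using f compose_in_ops[OF _ gs_ops len arity] by blast
  ultimately show "compose A f gs k \<in> {f \<in> ops A. top_ext A f \<in> B}"
    by (simp add: top_ext_compose[OF gs_ops len arity])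
next
  fix n f b
  assume "(Suc n, f) \<in> {f \<in> ops A. top_ext A f \<in> B} \<and>
      (\<forall>xs \<in> tuples A n. \<forall>b \<in> A. \<forall>c \<in> A. f (xs @ [b]) = f (xs @ [c]))"
    and b: "b \<in> A"
  then have "(Suc n, f) \<in> ops A" and "top_ext A (Suc n, f) \<in> B"
    and last_dummy: "\<forall>xs \<in> tuples A n. \<forall>b \<in> A. \<forall>c \<in> A. f (xs @ [b]) = f (xs @ [c])"
    by blast+
  then show "(n, \<lambda>xs. if xs \<in> tuples A n then f (xs @ [b]) else undefined)
      \<in> {f \<in> ops A. top_ext A f \<in> B}"
    using restrict_in_ops[OF _ b] top_ext_restrict[OF b last_dummy] by simp
qed simp

lemma clone_preimage_image:
  assumes C: "is_clone A C"
  shows "{f \<in> ops A. top_ext A f \<in> top_ext A ` C} = C"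
  using clone_subset_ops[OF C] clone_top_ext_closed[OF C] by blast

lemma block_subalg_image_preimage:
  assumes "is_block_subalg A B"
  shows "top_ext A ` {f \<in> ops A. top_ext A f \<in> B} = B"
  using assms by (auto simp: is_block_subalg_def block_univ_def)

theorem corollary6p17:
  fixes A :: "'a set"
  shows "\<exists>h. bij_betw h {C. is_clone A C} {B. is_block_subalg A B} \<and>
             (\<forall>C \<in> {C. is_clone A C}. \<forall>D \<in> {C. is_clone A C}. C \<subseteq> D \<longleftrightarrow> h C \<subseteq> h D)"
proof (intro exI conjI)
  let ?preimage = "\<lambda>B. {f \<in> ops A. top_ext A f \<in> B}"
  show "bij_betw (image (top_ext A)) {C. is_clone A C} {B. is_block_subalg A B}"
    by (rule bij_betw_byWitness[where f' = ?preimage])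
      (auto simp: clone_preimage_image block_subalg_image_preimage
        clone_image_block_subalg block_subalg_preimage_clone)
  show "\<forall>C \<in> {C. is_clone A C}. \<forall>D \<in> {C. is_clone A C}.
      C \<subseteq> D \<longleftrightarrow> top_ext A ` C \<subseteq> top_ext A ` D"
  proof (intro ballI iffI)
    fix C D
    assume "C \<in> {C. is_clone A C}" "D \<in> {C. is_clone A C}" "top_ext A ` C \<subseteq> top_ext A ` D"
    then have "?preimage (top_ext A ` C) \<subseteq> ?preimage (top_ext A ` D)"
      by blast
    then show "C \<subseteq> D"
      using \<open>C \<in> _\<close> \<open>D \<in> _\<close> by (simp add: clone_preimage_image)
  qed blast
qed

end
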